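(* Let $A$ be a unital C*-algebra, let $f\in A$ be self-adjoint, and let $\varepsilon>0$. Then there exist $n\in\mathbb N$, $\delta>0$ and self-adjoint $f_1,\dots,f_n\in A$ such that $\|f-f_i\|<\varepsilon$ for $i=1,\dots,n$, and $\frac1n(\tau(\chi_\delta(f_1))+\cdots+\tau(\chi_\delta(f_n)))<\varepsilon$ for all tracial states $\tau\in\mathrm{T}(A)$.
   Context: $\chi_\delta\colon\mathbb R\to\mathbb R$ is the continuous function equal to $1$ on $\{|t|<\delta/2\}$, $0$ on $\{|t|>\delta\}$, and linear otherwise; $\chi_\delta(f_i)$ is defined by continuous functional calculus. *)

theory Defs
  imports "HOL-Analysis.Analysis" "HOL-Computational_Algebra.Polynomial"
begin

class cstar_algebra = real_normed_algebra_1 + banach +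
  fixes cscale :: "complex \<Rightarrow> 'a \<Rightarrow> 'a"
    and cstar :: "'a \<Rightarrow> 'a"
  assumes cscale_of_real: "cscale (complex_of_real r) x = r *\<^sub>R x"
    and cscale_add_left: "cscale (a + b) x = cscale a x + cscale b x"
    and cscale_add_right: "cscale a (x + y) = cscale a x + cscale a y"
    and cscale_cscale: "cscale a (cscale b x) = cscale (a * b) x"
    and cscale_mult_left: "cscale a (x * y) = cscale a x * y"
    and cscale_mult_right: "cscale a (x * y) = x * cscale a y"
    and norm_cscale: "norm (cscale a x) = cmod a * norm x"
    and cstar_cstar: "cstar (cstar x) = x"
    and cstar_add: "cstar (x + y) = cstar x + cstar y"
    and cstar_cscale: "cstar (cscale a x) = cscale (cnj a) (cstar x)"
    and cstar_mult: "cstar (x * y) = cstar y * cstar x"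
    and cstar_identity: "norm (cstar x * x) = (norm x)^2"

definition self_adjoint :: "'a::cstar_algebra \<Rightarrow> bool" where
  "self_adjoint x \<longleftrightarrow> cstar x = x"

definition invertible_el :: "'a::ring_1 \<Rightarrow> bool" where
  "invertible_el x \<longleftrightarrow> (\<exists>y. x * y = 1 \<and> y * x = 1)"

definition cspectrum :: "'a::cstar_algebra \<Rightarrow> complex set" where
  "cspectrum x = {c. \<not> invertible_el (x - cscale c 1)}"

definition alg_poly :: "real poly \<Rightarrow> 'a::real_normed_algebra_1 \<Rightarrow> 'a" where
  "alg_poly p x = (\<Sum>i\<le>degree p. coeff p i *\<^sub>R x ^ i)"

definition cfc :: "(real \<Rightarrow> real) \<Rightarrow> 'a::cstar_algebra \<Rightarrow> 'a" where
  "cfc g x = (THE y. \<forall>p :: nat \<Rightarrow> real poly.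
      uniform_limit {t. complex_of_real t \<in> cspectrum x} (\<lambda>k t. poly (p k) t) g sequentially
      \<longrightarrow> (\<lambda>k. alg_poly (p k) x) \<longlonglongrightarrow> y)"

definition chi :: "real \<Rightarrow> real \<Rightarrow> real" where
  "chi \<delta> t = (if \<bar>t\<bar> < \<delta> / 2 then 1 else if \<bar>t\<bar> > \<delta> then 0 else 2 - 2 * \<bar>t\<bar> / \<delta>)"

definition tracial_state :: "('a::cstar_algebra \<Rightarrow> complex) \<Rightarrow> bool" where
  "tracial_state \<tau> \<longleftrightarrow>
     (\<forall>x y. \<tau> (x + y) = \<tau> x + \<tau> y) \<and>
     (\<forall>c x. \<tau> (cscale c x) = c * \<tau> x) \<and>
     (\<forall>x. Im (\<tau> (cstar x * x)) = 0 \<and> Re (\<tau> (cstar x * x)) \<ge> 0) \<and>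
     \<tau> 1 = 1 \<and>
     (\<forall>x y. \<tau> (x * y) = \<tau> (y * x))"

end

theory Submission
  imports Defs "HOL-Computational_Algebra.Fundamental_Theorem_Algebra"
begin

text \<open>Shift \<open>f\<close> by \<open>n\<close> scalars \<open>c\<^sub>i = i \<epsilon>/(n+1)\<close>: they are smaller than \<open>\<epsilon>\<close> and more than
  \<open>2\<delta>\<close> apart for \<open>\<delta> = \<epsilon>/(4(n+1))\<close>, so the bumps \<open>\<chi>\<^sub>\<delta>(t + c\<^sub>i)\<close> have disjoint supports and
  their sum \<open>g\<close> takes values in \<open>[0,1]\<close>. By the functional calculus
  \<open>\<Sum>\<^sub>i \<chi>\<^sub>\<delta>(f + c\<^sub>i) = g(f) = 1 - h(f)\<^sup>2\<close> with \<open>h = sqrt(1 - g)\<close> self-adjoint, so for every tracial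
  state (only positivity, additivity and \<open>\<tau>(1) = 1\<close> are used) the average of the traces is real
  and at most \<open>1/n < \<epsilon>\<close>.

  Most of the work is to make \<open>cfc\<close> meaningful: its defining limit exists and is unique because
  \<open>\<parallel>p(x)\<parallel> \<le> sup {\<bar>p(t)\<bar> | t \<in> \<sigma>(x)}\<close> for real polynomials \<open>p\<close> and self-adjoint \<open>x\<close>. This
  follows from the spectral mapping theorem for polynomials (factoring over \<open>\<complex>\<close>) and from the
  existence of a spectral value of modulus \<open>\<parallel>x\<parallel>\<close>, for which Rickart's elementary averaging over
  roots of unity replaces the spectral radius formula.\<close>

section \<open>Scalars and involution\<close>

lemma cscale_zero_left [simp]: "cscale 0 x = 0"
  using cscale_of_real[of 0 x] by simp

lemma cscale_one_left [simp]: "cscale 1 x = x"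
  using cscale_of_real[of 1 x] by simp

lemma cscale_zero_right [simp]: "cscale c 0 = 0"
  using cscale_add_right[of c 0 0] by simp

lemma cscale_minus_left: "cscale (- c) x = - cscale c x"
  using cscale_add_left[of c "- c" x] by (simp add: add.inverse_unique)

lemma cscale_minus_right: "cscale c (- x) = - cscale c x"
  using cscale_add_right[of c x "- x"] by (simp add: add.inverse_unique)

lemma cscale_diff_left: "cscale (a - b) x = cscale a x - cscale b x"
  using cscale_add_left[of a "- b" x] by (simp add: cscale_minus_left)

lemma cscale_diff_right: "cscale c (x - y) = cscale c x - cscale c y"
  using cscale_add_right[of c x "- y"] by (simp add: cscale_minus_right)

lemma cscale_sum_right: "cscale c (\<Sum>i\<in>A. f i) = (\<Sum>i\<in>A. cscale c (f i))"
  by (induction A rule: infinite_finite_induct) (auto simp: cscale_add_right)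

lemma cscale_one_mult: "cscale c 1 * x = cscale c x"
  using cscale_mult_left[of c 1 x] by simp

lemma mult_cscale_one: "x * cscale c 1 = cscale c x"
  using cscale_mult_right[of c x 1] by simp

lemma scaleR_conv_cscale: "r *\<^sub>R x = cscale (complex_of_real r) x"
  by (simp add: cscale_of_real)

lemma power_cscale: "cscale c x ^ n = cscale (c ^ n) (x ^ n)"
  by (induction n) (simp_all add: cscale_mult_left[symmetric] cscale_mult_right[symmetric]
      cscale_cscale mult.commute)

lemma bounded_linear_cscale_left: "bounded_linear (\<lambda>c. cscale c x)"
proof (rule bounded_linear_intro[of _ "norm x"])
  show "cscale (r *\<^sub>R c) x = r *\<^sub>R cscale c x" for r c
    by (simp add: scaleR_conv_of_real cscale_cscale[symmetric] cscale_of_real)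
qed (simp_all add: cscale_add_left norm_cscale)

lemma cstar_zero [simp]: "cstar 0 = 0"
  using cstar_add[of 0 0] by simp

lemma cstar_one [simp]: "cstar 1 = 1"
  using cstar_mult[of "cstar 1" 1] by (simp add: cstar_cstar)

lemma cstar_scaleR: "cstar (r *\<^sub>R x) = r *\<^sub>R cstar x"
  by (simp add: scaleR_conv_cscale cstar_cscale)

lemma cstar_sum: "cstar (\<Sum>i\<in>A. f i) = (\<Sum>i\<in>A. cstar (f i))"
  by (induction A rule: infinite_finite_induct) (auto simp: cstar_add)

lemma cstar_power: "cstar (x ^ n) = cstar x ^ n"
  by (induction n) (simp_all add: cstar_mult power_commutes)

lemma norm_cstar [simp]: "norm (cstar x) = norm x"
proof -
  have le: "norm y \<le> norm (cstar y)" for y :: 'a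
  proof (cases "y = 0")
    case False
    have "norm y * norm y = norm (cstar y * y)" by (simp add: cstar_identity power2_eq_square)
    also have "\<dots> \<le> norm (cstar y) * norm y" by (rule norm_mult_ineq)
    finally show ?thesis using False by simp
  qed simp
  show ?thesis using le[of x] le[of "cstar x"] by (simp add: cstar_cstar)
qed

lemma bounded_linear_cstar: "bounded_linear cstar"
  by (rule bounded_linear_intro[of _ 1]) (simp_all add: cstar_add cstar_scaleR)

lemma self_adjoint_add_scalar: "self_adjoint x \<Longrightarrow> self_adjoint (x + r *\<^sub>R 1)"
  by (simp add: self_adjoint_def cstar_add cstar_scaleR)

lemma norm_power_two_power_self_adjoint:
  assumes "self_adjoint x"
  shows "norm (x ^ 2 ^ m) = norm x ^ 2 ^ m"
proof (induction m)
  case (Suc m)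
  have "x ^ 2 ^ Suc m = cstar (x ^ 2 ^ m) * x ^ 2 ^ m"
    using assms by (simp add: cstar_power self_adjoint_def power_add[symmetric] mult_2)
  then show ?case using Suc by (simp add: cstar_identity power_mult[symmetric] mult.commute)
qed simp

section \<open>Invertible elements\<close>

definition inv_el :: "'a::ring_1 \<Rightarrow> 'a" where
  "inv_el x = (SOME y. x * y = 1 \<and> y * x = 1)"

lemma invertible_elI: "x * y = 1 \<Longrightarrow> y * x = 1 \<Longrightarrow> invertible_el x"
  unfolding invertible_el_def by blast

lemma inv_el_inverse:
  assumes "invertible_el x"
  shows "x * inv_el x = 1" and "inv_el x * x = 1"
  using someI_ex[OF assms[unfolded invertible_el_def]] unfolding inv_el_def by auto

lemma inv_el_eqI:
  assumes "x * y = 1" and "y * (x::'a::ring_1) = 1"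
  shows "inv_el x = y"
proof -
  have "inv_el x = inv_el x * (x * y)" using assms by simp
  also have "\<dots> = y"
    using inv_el_inverse(2)[OF invertible_elI[OF assms]] by (simp add: mult.assoc[symmetric])
  finally show ?thesis .
qed

lemma invertible_el_mult:
  assumes "invertible_el (x::'a::ring_1)" and "invertible_el y"
  shows "invertible_el (x * y)"
proof (rule invertible_elI)
  show "x * y * (inv_el y * inv_el x) = 1"
    by (metis assms inv_el_inverse(1) mult.assoc mult_1_left)
  show "inv_el y * inv_el x * (x * y) = 1"
    by (metis assms inv_el_inverse(2) mult.assoc mult_1_left)
qed

lemma invertible_el_one [simp]: "invertible_el (1::'a::ring_1)"
  by (rule invertible_elI) simp_all

lemma not_invertible_el_zero: "\<not> invertible_el (0::'a::ring_1)"
  unfolding invertible_el_def by simp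

lemma invertible_el_cscale_one: "c \<noteq> 0 \<Longrightarrow> invertible_el (cscale c 1)"
  by (rule invertible_elI[of _ "cscale (1 / c) 1"]) (simp_all add: cscale_one_mult cscale_cscale)

lemma invertible_el_cscale_iff:
  assumes "c \<noteq> 0"
  shows "invertible_el (cscale c x) \<longleftrightarrow> invertible_el x"
proof
  assume "invertible_el (cscale c x)"
  then have "invertible_el (cscale (1 / c) 1 * cscale c x)"
    using assms by (intro invertible_el_mult invertible_el_cscale_one) simp_all
  then show "invertible_el x" using assms by (simp add: cscale_one_mult cscale_cscale)
next
  assume "invertible_el x"
  then show "invertible_el (cscale c x)"
    using invertible_el_mult[OF invertible_el_cscale_one[OF assms]] by (simp add: cscale_one_mult)
qed

lemma neumann_series:
  fixes y :: "'a::{real_normed_algebra_1,banach}"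
  assumes "norm y < 1"
  shows "invertible_el (1 - y)" and "inv_el (1 - y) = (\<Sum>n. y ^ n)"
proof -
  have sum: "summable (\<lambda>n. y ^ n)" by (rule complete_algebra_summable_geometric[OF assms])
  define z where "z = (\<Sum>n. y ^ n)"
  have shift: "(\<Sum>n. y ^ Suc n) = z - 1" unfolding z_def using suminf_split_head[OF sum] by simp
  have "y * z = z - 1" unfolding z_def suminf_mult[OF sum, symmetric] using shift by (simp add: z_def)
  moreover have "z * y = z - 1"
    unfolding z_def suminf_mult2[OF sum] using shift by (simp add: z_def power_commutes)
  ultimately have "(1 - y) * z = 1" and "z * (1 - y) = 1" by (simp_all add: algebra_simps)
  then show "invertible_el (1 - y)" and "inv_el (1 - y) = (\<Sum>n. y ^ n)"
    unfolding z_def by (auto intro: invertible_elI inv_el_eqI)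
qed

lemma norm_inv_el_one_minus_le:
  fixes y :: "'a::{real_normed_algebra_1,banach}"
  assumes "norm y < 1"
  shows "norm (inv_el (1 - y)) \<le> 1 / (1 - norm y)"
proof -
  have sum: "summable (\<lambda>n. norm y ^ n)" using assms by simp
  have norm_sum: "summable (\<lambda>n. norm (y ^ n))"
    by (rule summable_comparison_test[OF _ sum]) (auto intro: norm_power_ineq)
  have "norm (\<Sum>n. y ^ n) \<le> (\<Sum>n. norm (y ^ n))" by (rule summable_norm[OF norm_sum])
  also have "\<dots> \<le> (\<Sum>n. norm y ^ n)" by (rule suminf_le[OF norm_power_ineq norm_sum sum])
  finally show ?thesis using assms by (simp add: neumann_series(2) suminf_geometric)
qed

lemma norm_inv_el_one_minus_diff_le:
  fixes y :: "'a::{real_normed_algebra_1,banach}"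
  assumes "norm y < 1"
  shows "norm (inv_el (1 - y) - 1) \<le> norm y / (1 - norm y)"
proof -
  have "inv_el (1 - y) - 1 = inv_el (1 - y) * y"
    using inv_el_inverse(2)[OF neumann_series(1)[OF assms]] by (simp add: algebra_simps)
  then have "norm (inv_el (1 - y) - 1) \<le> norm (inv_el (1 - y)) * norm y"
    by (simp add: norm_mult_ineq)
  also have "\<dots> \<le> 1 / (1 - norm y) * norm y"
    by (rule mult_right_mono[OF norm_inv_el_one_minus_le[OF assms]]) simp
  finally show ?thesis by simp
qed

lemma inv_el_perturb:
  fixes u w :: "'a::{real_normed_algebra_1,banach}"
  assumes u: "invertible_el u" and small: "norm (inv_el u) * norm (w - u) < 1"
  shows "invertible_el w"
    and "norm (inv_el w - inv_el u)
           \<le> norm (inv_el u) * norm (w - u) / (1 - norm (inv_el u) * norm (w - u)) * norm (inv_el u)"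
proof -
  define v where "v = inv_el u"
  define e where "e = v * (u - w)"
  have uv: "u * v = 1" "v * u = 1" using inv_el_inverse[OF u] by (simp_all add: v_def)
  have norm_e: "norm e \<le> norm v * norm (w - u)"
    unfolding e_def by (metis norm_minus_commute norm_mult_ineq)
  then have e: "norm e < 1" using small by (simp add: v_def)
  have w: "w = u * (1 - e)"
    unfolding e_def by (simp add: algebra_simps uv mult.assoc[symmetric])
  have inv: "(1 - e) * inv_el (1 - e) = 1" "inv_el (1 - e) * (1 - e) = 1"
    using inv_el_inverse[OF neumann_series(1)[OF e]] by simp_all
  have "w * (inv_el (1 - e) * v) = 1" and "inv_el (1 - e) * v * w = 1"
    unfolding w by (metis inv uv mult.assoc mult_1_left mult_1_right)+
  then have "invertible_el w" and inv_w: "inv_el w = inv_el (1 - e) * v"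
    by (auto intro: invertible_elI inv_el_eqI)
  then show "invertible_el w" by simp
  have "norm (inv_el w - v) = norm ((inv_el (1 - e) - 1) * v)"
    by (simp add: inv_w algebra_simps)
  also have "\<dots> \<le> norm e / (1 - norm e) * norm v"
    by (rule order_trans[OF norm_mult_ineq mult_right_mono[OF norm_inv_el_one_minus_diff_le[OF e]]])
      simp
  also have "\<dots> \<le> norm v * norm (w - u) / (1 - norm v * norm (w - u)) * norm v"
    using norm_e small by (intro mult_right_mono frac_le) (simp_all add: v_def)
  finally show "norm (inv_el w - inv_el u)
      \<le> norm (inv_el u) * norm (w - u) / (1 - norm (inv_el u) * norm (w - u)) * norm (inv_el u)"
    by (simp add: v_def)
qed

lemma tendsto_inv_el:
  fixes f :: "'b \<Rightarrow> 'a::{real_normed_algebra_1,banach}"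
  assumes f: "(f \<longlongrightarrow> u) F" and u: "invertible_el u"
  shows "((\<lambda>x. inv_el (f x)) \<longlongrightarrow> inv_el u) F"
proof -
  define m where "m = norm (inv_el u)"
  have dist: "((\<lambda>x. norm (f x - u)) \<longlongrightarrow> 0) F"
    using f by (intro tendsto_norm_zero) (simp add: LIM_zero)
  then have "((\<lambda>x. m * norm (f x - u)) \<longlongrightarrow> 0) F" by (rule tendsto_mult_right_zero)
  then have "\<forall>\<^sub>F x in F. m * norm (f x - u) < 1 / 2" by (rule order_tendstoD) simp
  then have "\<forall>\<^sub>F x in F. norm (inv_el (f x) - inv_el u) \<le> 2 * m * m * norm (f x - u)"
  proof eventually_elim
    case (elim x)
    have "norm (inv_el (f x) - inv_el u) \<le> m * norm (f x - u) / (1 - m * norm (f x - u)) * m"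
      using inv_el_perturb(2)[OF u, of "f x"] elim by (simp add: m_def)
    also have "\<dots> \<le> m * norm (f x - u) / (1 / 2) * m"
      using elim by (intro mult_right_mono divide_left_mono) (simp_all add: m_def)
    finally show ?case by (simp add: mult.commute mult.left_commute)
  qed
  moreover have "((\<lambda>x. 2 * m * m * norm (f x - u)) \<longlongrightarrow> 0) F"
    by (rule tendsto_mult_right_zero[OF dist])
  ultimately have "((\<lambda>x. inv_el (f x) - inv_el u) \<longlongrightarrow> 0) F" by (rule Lim_null_comparison)
  then show ?thesis by (rule LIM_zero_cancel)
qed


section \<open>Spectrum\<close>

lemma cspectrum_norm_le:
  assumes "c \<in> cspectrum x"
  shows "cmod c \<le> norm x"
proof (rule ccontr)
  assume "\<not> cmod c \<le> norm x"
  then have lt: "norm x < cmod c" by simp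
  then have c: "c \<noteq> 0" by auto
  have "norm (cscale (1 / c) x) < 1"
    using lt c by (simp add: norm_cscale norm_divide divide_less_eq_1)
  then have "invertible_el (cscale (- c) (1 - cscale (1 / c) x))"
    using c by (simp add: invertible_el_cscale_iff neumann_series(1))
  moreover have "cscale (- c) (1 - cscale (1 / c) x) = x - cscale c 1"
    using c by (simp add: cscale_diff_right cscale_cscale cscale_minus_left)
  ultimately show False using assms by (simp add: cspectrum_def)
qed

lemma norm_add_imaginary_scalar:
  assumes "self_adjoint x"
  shows "norm (x + cscale (\<i> * t) 1) ^ 2 \<le> norm x ^ 2 + t ^ 2"
proof -
  define a where "a = \<i> * complex_of_real t"
  have sq: "- a * a = complex_of_real (t ^ 2)" by (simp add: a_def power2_eq_square algebra_simps)
  have "cstar (x + cscale a 1) * (x + cscale a 1) = (x + cscale (- a) 1) * (x + cscale a 1)"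
    using assms by (simp add: a_def self_adjoint_def cstar_add cstar_cscale)
  also have "\<dots> = x * x + (cscale a x + cscale (- a) x) + cscale (- a * a) 1"
    by (simp add: algebra_simps cscale_one_mult mult_cscale_one cscale_cscale cscale_add_right)
  also have "\<dots> = x * x + cscale (t ^ 2) 1"
    unfolding sq by (simp add: cscale_minus_left)
  finally have "cstar (x + cscale a 1) * (x + cscale a 1) = x * x + cscale (t ^ 2) 1" .
  then have "norm (x + cscale (\<i> * t) 1) ^ 2 = norm (x * x + cscale (t ^ 2) 1)"
    by (simp add: a_def cstar_identity[symmetric])
  also have "\<dots> \<le> norm x ^ 2 + t ^ 2"
    using norm_triangle_ineq[of "x * x" "cscale (t ^ 2) 1"] norm_mult_ineq[of x x]
    by (simp add: norm_cscale norm_mult power2_eq_square)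
  finally show ?thesis .
qed

lemma cspectrum_self_adjoint_real:
  assumes sa: "self_adjoint x" and c: "c \<in> cspectrum x"
  shows "Im c = 0"
proof (rule ccontr)
  assume im: "Im c \<noteq> 0"
  define t where "t = (norm x ^ 2 + 1) / (2 * Im c)"
  have shift: "x + cscale (\<i> * t) 1 - cscale (c + \<i> * t) 1 = x - cscale c 1"
    by (simp add: cscale_add_left)
  have "c + \<i> * t \<in> cspectrum (x + cscale (\<i> * t) 1)"
    using c unfolding cspectrum_def mem_Collect_eq shift .
  then have "cmod (c + \<i> * t) ^ 2 \<le> norm (x + cscale (\<i> * t) 1) ^ 2"
    by (intro power_mono cspectrum_norm_le) simp_all
  also have "\<dots> \<le> norm x ^ 2 + t ^ 2" by (rule norm_add_imaginary_scalar[OF sa])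
  finally have "Re c ^ 2 + (Im c + t) ^ 2 \<le> norm x ^ 2 + t ^ 2"
    by (simp add: cmod_power2)
  then have "Re c ^ 2 + Im c ^ 2 + 2 * Im c * t \<le> norm x ^ 2"
    by (simp add: power2_sum)
  moreover have "2 * Im c * t = norm x ^ 2 + 1" using im by (simp add: t_def)
  ultimately show False by (smt (verit) zero_le_power2)
qed

lemma inv_el_one_minus_square:
  fixes y :: "'a::real_algebra_1"
  assumes minus: "invertible_el (1 - y)" and plus: "invertible_el (1 + y)"
  shows "invertible_el (1 - y * y)"
    and "inv_el (1 - y * y) = (1 / 2) *\<^sub>R (inv_el (1 - y) + inv_el (1 + y))"
proof -
  have fac: "(1 - y) * (1 + y) = 1 - y * y" "(1 + y) * (1 - y) = 1 - y * y"
    by (simp_all add: algebra_simps)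
  show "invertible_el (1 - y * y)" using invertible_el_mult[OF minus plus] fac by simp
  note inv = inv_el_inverse[OF minus] inv_el_inverse[OF plus]
  have "(1 - y * y) * inv_el (1 - y) = 1 + y" "(1 - y * y) * inv_el (1 + y) = 1 - y"
    by (metis fac inv mult.assoc mult_1_right)+
  moreover have "inv_el (1 - y) * (1 - y * y) = 1 + y" "inv_el (1 + y) * (1 - y * y) = 1 - y"
    by (metis fac inv mult.assoc mult_1_left)+
  moreover have "(1 / 2) *\<^sub>R (2::'a) = 1"
    using scaleR_scaleR[of "1 / 2" 2 "1::'a"] by (simp add: scaleR_2)
  ultimately show "inv_el (1 - y * y) = (1 / 2) *\<^sub>R (inv_el (1 - y) + inv_el (1 + y))"
    by (intro inv_el_eqI) (simp_all add: distrib_left distrib_right)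
qed

lemma sum_lessThan_double:
  "(\<Sum>k<2 * (n::nat). f k) = (\<Sum>j<n. f (2 * j)) + (\<Sum>j<n. f (2 * j + 1) :: 'a::comm_monoid_add)"
  by (induction n) (simp_all add: algebra_simps)

lemma cis_root_of_unity: "cis (2 * pi * real k / 2 ^ m) ^ 2 ^ m = 1"
proof -
  have "cis (2 * pi * real k / 2 ^ m) ^ 2 ^ m = cis (2 * pi * real k)"
    unfolding Complex.DeMoivre by simp
  then show ?thesis by (simp add: cis_multiple_2pi)
qed

definition root_average_inv :: "nat \<Rightarrow> 'a::cstar_algebra \<Rightarrow> 'a" where
  "root_average_inv m y =
     (1 / 2 ^ m) *\<^sub>R (\<Sum>k<2 ^ m. inv_el (1 - cscale (cis (2 * pi * real k / 2 ^ m)) y))"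

lemma root_average_inv_Suc:
  "root_average_inv (Suc m) y =
     (1 / 2) *\<^sub>R (root_average_inv m y + root_average_inv m (cscale (cis (pi / 2 ^ m)) y))"
proof -
  have even: "cis (2 * pi * real (2 * j) / 2 ^ Suc m) = cis (2 * pi * real j / 2 ^ m)" for j
    by (simp add: field_simps)
  have "cis (2 * pi * real (2 * j + 1) / 2 ^ Suc m) = cis (2 * pi * real j / 2 ^ m) * cis (pi / 2 ^ m)"
    for j unfolding cis_mult by (rule arg_cong[where f = cis]) (simp add: field_simps)
  then have odd: "cscale (cis (2 * pi * real (2 * j + 1) / 2 ^ Suc m)) y
      = cscale (cis (2 * pi * real j / 2 ^ m)) (cscale (cis (pi / 2 ^ m)) y)" for j
    by (simp add: cscale_cscale)
  show ?thesis
    unfolding root_average_inv_def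
    by (simp only: sum_lessThan_double[of _ "2 ^ m", folded power_Suc] even odd)
      (simp add: scaleR_add_right)
qed

text \<open>The \<open>2^(m+1)\<close>-th roots of unity are the \<open>2^m\<close>-th roots \<open>\<omega>\<close> and the \<open>\<omega>\<eta>\<close> with
  \<open>\<eta>^2^m = -1\<close>; so the average splits into the inverses of \<open>1 - y^2^m\<close> and \<open>1 + y^2^m\<close>,
  whose mean is the inverse of \<open>1 - y^2^(m+1)\<close>.\<close>

lemma root_average_inv_eq:
  fixes y :: "'a::cstar_algebra"
  assumes "\<And>\<omega>. \<omega> ^ 2 ^ m = 1 \<Longrightarrow> invertible_el (1 - cscale \<omega> y)"
  shows "invertible_el (1 - y ^ 2 ^ m) \<and> root_average_inv m y = inv_el (1 - y ^ 2 ^ m)"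
  using assms
proof (induction m arbitrary: y)
  case 0
  then show ?case using "0.prems"[of 1] by (simp add: root_average_inv_def)
next
  case (Suc m)
  define \<eta> where "\<eta> = cis (pi / 2 ^ m)"
  define z where "z = y ^ 2 ^ m"
  have \<eta>: "\<eta> ^ 2 ^ m = - 1" unfolding \<eta>_def Complex.DeMoivre by simp
  have IH_y: "invertible_el (1 - z) \<and> root_average_inv m y = inv_el (1 - z)"
    unfolding z_def
  proof (rule Suc.IH)
    fix \<omega> :: complex assume "\<omega> ^ 2 ^ m = 1"
    then have "\<omega> ^ 2 ^ Suc m = 1" unfolding power_Suc2 power_mult by simp
    then show "invertible_el (1 - cscale \<omega> y)" by (rule Suc.prems)
  qed
  have "invertible_el (1 - cscale \<eta> y ^ 2 ^ m) \<and>
      root_average_inv m (cscale \<eta> y) = inv_el (1 - cscale \<eta> y ^ 2 ^ m)"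
  proof (rule Suc.IH)
    fix \<omega> :: complex assume "\<omega> ^ 2 ^ m = 1"
    then have "(\<omega> * \<eta>) ^ 2 ^ Suc m = 1" unfolding power_Suc2 power_mult power_mult_distrib \<eta> by simp
    then show "invertible_el (1 - cscale \<omega> (cscale \<eta> y))"
      unfolding cscale_cscale by (rule Suc.prems)
  qed
  moreover have "cscale \<eta> y ^ 2 ^ m = - z"
    by (simp add: z_def power_cscale \<eta> cscale_minus_left)
  ultimately have IH_\<eta>y: "invertible_el (1 + z) \<and> root_average_inv m (cscale \<eta> y) = inv_el (1 + z)"
    by simp
  have "y ^ 2 ^ Suc m = z * z" by (simp add: z_def power_add[symmetric] mult_2)
  moreover have "root_average_inv (Suc m) y = (1 / 2) *\<^sub>R (inv_el (1 - z) + inv_el (1 + z))"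
    unfolding root_average_inv_Suc \<eta>_def[symmetric] using IH_y IH_\<eta>y by simp
  ultimately show ?case
    using inv_el_one_minus_square[of z] IH_y IH_\<eta>y by simp
qed

lemma root_average_inv_cscale_eq:
  assumes inv: "\<And>\<zeta>. cmod \<zeta> \<le> 1 \<Longrightarrow> invertible_el (1 - cscale \<zeta> b)" and "cmod \<zeta> \<le> 1"
  shows "invertible_el (1 - cscale (\<zeta> ^ 2 ^ m) (b ^ 2 ^ m)) \<and>
    root_average_inv m (cscale \<zeta> b) = inv_el (1 - cscale (\<zeta> ^ 2 ^ m) (b ^ 2 ^ m))"
proof -
  have "invertible_el (1 - cscale \<omega> (cscale \<zeta> b))" if "\<omega> ^ 2 ^ m = 1" for \<omega>
    using power_eq_1_iff[OF that] \<open>cmod \<zeta> \<le> 1\<close> by (simp add: cscale_cscale inv norm_mult)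
  then show ?thesis using root_average_inv_eq[of m "cscale \<zeta> b"] by (simp add: power_cscale)
qed

lemma norm_root_average_inv_diff_le:
  assumes "\<And>\<omega>. \<omega> ^ 2 ^ m = 1 \<Longrightarrow> norm (inv_el (1 - cscale \<omega> y) - inv_el (1 - cscale \<omega> z)) \<le> e"
  shows "norm (root_average_inv m y - root_average_inv m z) \<le> e"
proof -
  define D where "D = (\<Sum>k<2 ^ m. inv_el (1 - cscale (cis (2 * pi * real k / 2 ^ m)) y)
      - inv_el (1 - cscale (cis (2 * pi * real k / 2 ^ m)) z))"
  have "norm D \<le> (\<Sum>k<(2::nat) ^ m. e)"
    unfolding D_def by (intro sum_norm_le assms cis_root_of_unity)
  moreover have "root_average_inv m y - root_average_inv m z = (1 / 2 ^ m) *\<^sub>R D"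
    by (simp add: root_average_inv_def D_def sum_subtractf scaleR_diff_right)
  ultimately show ?thesis by (simp add: field_simps)
qed

lemma norm_less_one_if_inv_el_near_one:
  fixes c :: "'a::{real_normed_algebra_1,banach}"
  assumes c: "invertible_el (1 - c)" and near: "norm (inv_el (1 - c) - 1) < 1 / 2"
  shows "norm c < 1"
proof -
  define a where "a = inv_el (1 - c)"
  have small: "norm (1 - a) < 1 / 2" using near by (simp add: a_def norm_minus_commute)
  have "inv_el (1 - (1 - a)) = 1 - c"
    using inv_el_inverse[OF c] by (intro inv_el_eqI) (simp_all add: a_def)
  then have "norm c = norm (inv_el (1 - (1 - a)) - 1)" by simp
  also have "\<dots> \<le> norm (1 - a) / (1 - norm (1 - a))"
    using small by (intro norm_inv_el_one_minus_diff_le) simp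
  also have "\<dots> < 1" using small by (simp add: field_simps)
  finally show ?thesis .
qed

lemma inv_el_one_minus_cscale_radially_close:
  fixes b :: "'a::cstar_algebra"
  assumes inv: "\<And>\<zeta>. cmod \<zeta> \<le> 1 \<Longrightarrow> invertible_el (1 - cscale \<zeta> b)"
  obtains s where "0 < s" and "s < 1" and "\<And>\<omega>. cmod \<omega> = 1 \<Longrightarrow>
    norm (inv_el (1 - cscale \<omega> b) - inv_el (1 - cscale (\<omega> * complex_of_real s) b)) \<le> 1 / 4"
proof -
  define R where "R \<zeta> = inv_el (1 - cscale \<zeta> b)" for \<zeta>
  have "continuous_on (cball 0 1) R"
    unfolding continuous_on_def R_def
  proof (intro ballI tendsto_inv_el)
    fix \<zeta> :: complex assume "\<zeta> \<in> cball 0 1"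
    then show "invertible_el (1 - cscale \<zeta> b)" by (intro inv) simp
    show "((\<lambda>z. 1 - cscale z b) \<longlongrightarrow> 1 - cscale \<zeta> b) (at \<zeta> within cball 0 1)"
      by (intro tendsto_diff tendsto_const bounded_linear.tendsto[OF bounded_linear_cscale_left]
          tendsto_ident_at)
  qed
  then have "uniformly_continuous_on (cball 0 1) R" by (rule compact_uniformly_continuous) simp
  then obtain d where d: "d > 0" and close: "\<And>\<zeta> \<zeta>'. \<zeta> \<in> cball 0 1 \<Longrightarrow> \<zeta>' \<in> cball 0 1 \<Longrightarrow>
      dist \<zeta>' \<zeta> < d \<Longrightarrow> dist (R \<zeta>') (R \<zeta>) < 1 / 4"
    unfolding uniformly_continuous_on_def by (metis zero_less_divide_1_iff zero_less_numeral)
  define s where "s = 1 - min d 1 / 2"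
  have s: "0 < s" "s < 1" "1 - s < d" using d by (auto simp: s_def)
  have "dist (R \<omega>) (R (\<omega> * complex_of_real s)) < 1 / 4" if "cmod \<omega> = 1" for \<omega>
  proof (rule close)
    have "dist \<omega> (\<omega> * complex_of_real s) = cmod \<omega> * cmod (1 - complex_of_real s)"
      by (simp add: dist_norm norm_mult[symmetric] algebra_simps)
    moreover have "cmod (1 - complex_of_real s) = 1 - s"
      using s by (metis abs_of_pos diff_gt_0_iff_gt norm_of_real of_real_1 of_real_diff)
    ultimately show "dist \<omega> (\<omega> * complex_of_real s) < d" using that s by simp
  qed (use that s in \<open>simp_all add: norm_mult\<close>)
  with s show ?thesis by (intro that[of s]) (simp_all add: R_def dist_norm less_imp_le)
qed

text \<open>Rickart's elementary argument: were \<open>1 - \<zeta> b\<close> invertible on the closed unit disc, averaging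
  its inverse over the \<open>N\<close>-th roots of unity at radii \<open>1\<close> and \<open>s\<close> would put \<open>(1 - b^N)\<inverse>\<close> within
  \<open>1/2\<close> of \<open>1\<close>, forcing \<open>\<parallel>b^N\<parallel> < 1\<close>, whereas \<open>\<parallel>b^N\<parallel> = \<parallel>b\<parallel>^N = 1\<close> for \<open>N = 2^m\<close>.\<close>

lemma ex_not_invertible_one_minus_cscale:
  assumes sa: "self_adjoint b" and norm_b: "norm b = 1"
  shows "\<exists>\<zeta>. cmod \<zeta> \<le> 1 \<and> \<not> invertible_el (1 - cscale \<zeta> b)"
proof (rule ccontr)
  assume "\<not> ?thesis"
  then have inv: "invertible_el (1 - cscale \<zeta> b)" if "cmod \<zeta> \<le> 1" for \<zeta>
    using that by blast
  obtain s where s: "0 < s" "s < 1" and close: "\<And>\<omega>. cmod \<omega> = 1 \<Longrightarrow>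
      norm (inv_el (1 - cscale \<omega> b) - inv_el (1 - cscale (\<omega> * complex_of_real s) b)) \<le> 1 / 4"
    using inv_el_one_minus_cscale_radially_close[OF inv] by blast
  obtain m where "s ^ m < 1 / 8" using real_arch_pow_inv[of "1 / 8" s] s by auto
  moreover have "s ^ 2 ^ m \<le> s ^ m"
    using s by (intro power_decreasing) (simp_all add: less_exp less_imp_le)
  ultimately have s_pow: "s ^ 2 ^ m \<le> 1 / 8" by simp
  define N where "N = (2::nat) ^ m"
  define c where "c = cscale (complex_of_real (s ^ N)) (b ^ N)"
  have norm_c: "norm c = s ^ N"
    using s norm_power_two_power_self_adjoint[OF sa, of m] norm_b
    by (simp add: c_def norm_cscale norm_power N_def)
  have avg: "invertible_el (1 - cscale (\<zeta> ^ N) (b ^ N)) \<and>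
      root_average_inv m (cscale \<zeta> b) = inv_el (1 - cscale (\<zeta> ^ N) (b ^ N))"
    if "cmod \<zeta> \<le> 1" for \<zeta>
    using root_average_inv_cscale_eq[OF inv that] by (simp add: N_def)
  have "norm (root_average_inv m b - root_average_inv m (cscale (complex_of_real s) b)) \<le> 1 / 4"
  proof (rule norm_root_average_inv_diff_le)
    fix \<omega> :: complex assume "\<omega> ^ 2 ^ m = 1"
    then have "cmod \<omega> = 1" using power_eq_1_iff by fastforce
    then show "norm (inv_el (1 - cscale \<omega> b) - inv_el (1 - cscale \<omega> (cscale (complex_of_real s) b)))
        \<le> 1 / 4"
      unfolding cscale_cscale by (rule close)
  qed
  then have "norm (inv_el (1 - b ^ N) - inv_el (1 - c)) \<le> 1 / 4"
    using avg[of 1] avg[of "complex_of_real s"] s by (simp add: c_def norm_power)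
  moreover have "norm (inv_el (1 - c) - 1) \<le> 1 / 7"
  proof -
    have "norm (inv_el (1 - c) - 1) \<le> s ^ N / (1 - s ^ N)"
      using norm_inv_el_one_minus_diff_le[of c] norm_c s_pow by (simp add: N_def)
    also have "\<dots> \<le> (1 / 8) / (1 - 1 / 8)"
      using s_pow s by (intro frac_le) (simp_all add: N_def)
    finally show ?thesis by simp
  qed
  ultimately have "norm (inv_el (1 - b ^ N) - 1) < 1 / 2"
    using norm_triangle_ineq[of "inv_el (1 - b ^ N) - inv_el (1 - c)" "inv_el (1 - c) - 1"] by simp
  then have "norm (b ^ N) < 1"
    using avg[of 1] by (intro norm_less_one_if_inv_el_near_one) simp_all
  then show False using norm_power_two_power_self_adjoint[OF sa, of m] norm_b by (simp add: N_def)
qed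

definition real_spectrum :: "'a::cstar_algebra \<Rightarrow> real set" where
  "real_spectrum x = {t. complex_of_real t \<in> cspectrum x}"

lemma abs_le_norm_if_real_spectrum: "t \<in> real_spectrum x \<Longrightarrow> \<bar>t\<bar> \<le> norm x"
  using cspectrum_norm_le[of "complex_of_real t" x] by (simp add: real_spectrum_def)

lemma real_spectrum_subset: "real_spectrum x \<subseteq> {- norm x..norm x}"
  using abs_le_norm_if_real_spectrum by (fastforce simp: abs_le_iff)

lemma real_spectrum_norm_attained:
  assumes sa: "self_adjoint x"
  shows "\<exists>t\<in>real_spectrum x. norm x \<le> \<bar>t\<bar>"
proof (cases "x = 0")
  case True
  then show ?thesis by (intro bexI[of _ 0]) (simp_all add: real_spectrum_def cspectrum_def not_invertible_el_zero)
next
  case False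
  define r where "r = norm x"
  have r: "r > 0" using False by (simp add: r_def)
  define b where "b = (1 / r) *\<^sub>R x"
  have "self_adjoint b" using sa by (simp add: b_def self_adjoint_def cstar_scaleR)
  moreover have "norm b = 1" using r by (simp add: b_def r_def)
  ultimately obtain \<zeta> where \<zeta>: "cmod \<zeta> \<le> 1" "\<not> invertible_el (1 - cscale \<zeta> b)"
    using ex_not_invertible_one_minus_cscale by blast
  then have \<zeta>0: "\<zeta> \<noteq> 0" by auto
  define l where "l = 1 / \<zeta>"
  have "1 - cscale \<zeta> b = cscale (- \<zeta>) (b - cscale l 1)"
    using \<zeta>0 by (simp add: l_def cscale_diff_right cscale_cscale cscale_minus_left)
  then have b_l: "\<not> invertible_el (b - cscale l 1)"
    using \<zeta> \<zeta>0 by (simp add: invertible_el_cscale_iff)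
  then have "Im l = 0"
    using cspectrum_self_adjoint_real[OF \<open>self_adjoint b\<close>] by (simp add: cspectrum_def)
  then have l: "l = complex_of_real (Re l)" by (simp add: complex_eq_iff)
  have "x - cscale (complex_of_real (r * Re l)) 1 = cscale (complex_of_real r) (b - cscale l 1)"
    using r by (subst l) (simp add: b_def cscale_diff_right cscale_cscale scaleR_conv_cscale)
  then have "r * Re l \<in> real_spectrum x"
    using b_l r by (simp add: real_spectrum_def cspectrum_def invertible_el_cscale_iff)
  moreover have "1 \<le> cmod l" using \<zeta> \<zeta>0 by (simp add: l_def norm_divide le_divide_eq_1)
  then have "1 \<le> \<bar>Re l\<bar>" by (subst (asm) l) simp
  ultimately show ?thesis using r by (intro bexI[of _ "r * Re l"]) (simp_all add: r_def abs_mult)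
qed


section \<open>Polynomials in an element\<close>

definition ceval :: "complex poly \<Rightarrow> 'a::cstar_algebra \<Rightarrow> 'a" where
  "ceval q x = (\<Sum>i\<le>degree q. cscale (coeff q i) (x ^ i))"

lemma ceval_eq_sum_atMost:
  "degree q \<le> n \<Longrightarrow> ceval q x = (\<Sum>i\<le>n. cscale (coeff q i) (x ^ i))"
  unfolding ceval_def by (rule sum.mono_neutral_left) (auto simp: coeff_eq_0)

lemma ceval_0 [simp]: "ceval 0 x = 0"
  by (simp add: ceval_def)

lemma ceval_pCons: "ceval (pCons a q) x = cscale a 1 + x * ceval q x"
proof -
  have "ceval (pCons a q) x = (\<Sum>i\<le>Suc (degree q). cscale (coeff (pCons a q) i) (x ^ i))"
    by (rule ceval_eq_sum_atMost) (rule degree_pCons_le)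
  also have "\<dots> = cscale a 1 + (\<Sum>i\<le>degree q. cscale (coeff q i) (x * x ^ i))"
    by (subst sum.atMost_Suc_shift) simp
  also have "\<dots> = cscale a 1 + x * ceval q x"
    by (simp add: ceval_def sum_distrib_left cscale_mult_right)
  finally show ?thesis .
qed

lemma ceval_add: "ceval (p + q) x = ceval p x + ceval q x"
proof -
  define n where "n = max (degree p) (degree q)"
  have "ceval (p + q) x = (\<Sum>i\<le>n. cscale (coeff (p + q) i) (x ^ i))"
    by (rule ceval_eq_sum_atMost) (simp add: n_def degree_add_le)
  also have "\<dots> = ceval p x + ceval q x"
    by (simp add: cscale_add_left sum.distrib ceval_eq_sum_atMost[of _ n] n_def)
  finally show ?thesis .
qed

lemma ceval_smult: "ceval (smult c p) x = cscale c (ceval p x)"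
  by (simp add: ceval_eq_sum_atMost[OF degree_smult_le] ceval_def cscale_sum_right cscale_cscale)

lemma ceval_mult: "ceval (p * q) x = ceval p x * ceval q x"
proof (induction p)
  case (pCons a p)
  have "ceval (pCons a p * q) x = cscale a (ceval q x) + x * (ceval p x * ceval q x)"
    by (simp add: ceval_add ceval_smult ceval_pCons pCons.IH)
  also have "\<dots> = ceval (pCons a p) x * ceval q x"
    by (simp add: ceval_pCons distrib_right cscale_one_mult mult.assoc)
  finally show ?case .
qed simp

lemma invertible_el_ceval:
  assumes "q \<noteq> 0" and "\<And>c. poly q c = 0 \<Longrightarrow> c \<notin> cspectrum x"
  shows "invertible_el (ceval q x)"
  using assms
proof (induction "degree q" arbitrary: q rule: less_induct)
  case less
  show ?case
  proof (cases "degree q = 0")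
    case True
    then obtain c where "q = [:c:]" by (metis degree_eq_zeroE)
    then show ?thesis
      using less.prems by (simp add: ceval_pCons invertible_el_cscale_one)
  next
    case False
    then obtain c where "poly q c = 0"
      using fundamental_theorem_of_algebra[of q] by (auto simp: constant_degree)
    then obtain r where q: "q = [:- c, 1:] * r" by (metis poly_eq_0_iff_dvd dvdE)
    with less.prems have "r \<noteq> 0" by auto
    then have "degree q = 1 + degree r" unfolding q by (subst degree_mult_eq) simp_all
    then have "degree r < degree q" by simp
    moreover have "poly r c' = 0 \<Longrightarrow> c' \<notin> cspectrum x" for c'
      using less.prems(2)[of c'] by (simp add: q)
    ultimately have "invertible_el (ceval r x)" using less.hyps \<open>r \<noteq> 0\<close> by blast
    moreover have "invertible_el (x - cscale c 1)"
      using less.prems(2) \<open>poly q c = 0\<close> by (simp add: cspectrum_def)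
    moreover have "ceval q x = (x - cscale c 1) * ceval r x"
      unfolding q ceval_mult by (simp add: ceval_pCons cscale_minus_left)
    ultimately show ?thesis by (simp add: invertible_el_mult)
  qed
qed

lemma alg_poly_eq_sum_atMost:
  "degree p \<le> n \<Longrightarrow> alg_poly p x = (\<Sum>i\<le>n. coeff p i *\<^sub>R x ^ i)"
  unfolding alg_poly_def by (rule sum.mono_neutral_left) (auto simp: coeff_eq_0)

lemma alg_poly_0 [simp]: "alg_poly 0 x = 0"
  by (simp add: alg_poly_def)

lemma alg_poly_pCons: "alg_poly (pCons a p) x = a *\<^sub>R 1 + x * alg_poly p x"
proof -
  have "alg_poly (pCons a p) x = (\<Sum>i\<le>Suc (degree p). coeff (pCons a p) i *\<^sub>R x ^ i)"
    by (rule alg_poly_eq_sum_atMost) (rule degree_pCons_le)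
  also have "\<dots> = a *\<^sub>R 1 + (\<Sum>i\<le>degree p. coeff p i *\<^sub>R (x * x ^ i))"
    by (subst sum.atMost_Suc_shift) simp
  also have "\<dots> = a *\<^sub>R 1 + x * alg_poly p x"
    by (simp add: alg_poly_def sum_distrib_left)
  finally show ?thesis .
qed

lemma alg_poly_const: "alg_poly [:c:] x = c *\<^sub>R 1"
  using alg_poly_pCons[of c 0 x] by simp

lemma alg_poly_add: "alg_poly (p + q) x = alg_poly p x + alg_poly q x"
proof -
  define n where "n = max (degree p) (degree q)"
  have "alg_poly (p + q) x = (\<Sum>i\<le>n. coeff (p + q) i *\<^sub>R x ^ i)"
    by (rule alg_poly_eq_sum_atMost) (simp add: n_def degree_add_le)
  also have "\<dots> = alg_poly p x + alg_poly q x"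
    by (simp add: scaleR_add_left sum.distrib alg_poly_eq_sum_atMost[of _ n] n_def)
  finally show ?thesis .
qed

lemma alg_poly_smult: "alg_poly (smult c p) x = c *\<^sub>R alg_poly p x"
  by (simp add: alg_poly_eq_sum_atMost[OF degree_smult_le] alg_poly_def scaleR_sum_right)

lemma alg_poly_diff: "alg_poly (p - q) x = alg_poly p x - alg_poly q x"
  using alg_poly_add[of p "- q" x] alg_poly_smult[of "- 1" q x] by simp

lemma alg_poly_mult: "alg_poly (p * q) x = alg_poly p x * alg_poly q x"
proof (induction p)
  case (pCons a p)
  have "alg_poly (pCons a p * q) x = a *\<^sub>R alg_poly q x + x * (alg_poly p x * alg_poly q x)"
    by (simp add: alg_poly_add alg_poly_smult alg_poly_pCons pCons.IH)
  also have "\<dots> = alg_poly (pCons a p) x * alg_poly q x"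
    by (simp add: alg_poly_pCons distrib_right mult.assoc)
  finally show ?case .
qed simp

lemma alg_poly_pcompose: "alg_poly (pcompose p q) x = alg_poly p (alg_poly q x)"
  by (induction p) (simp_all add: pcompose_pCons alg_poly_add alg_poly_mult alg_poly_const alg_poly_pCons)

lemma alg_poly_eq_ceval: "alg_poly p x = ceval (map_poly complex_of_real p) x"
  by (simp add: alg_poly_def ceval_def degree_map_poly coeff_map_poly cscale_of_real)

lemma self_adjoint_alg_poly: "self_adjoint x \<Longrightarrow> self_adjoint (alg_poly p x)"
  by (simp add: self_adjoint_def alg_poly_def cstar_sum cstar_scaleR cstar_power)

lemma poly_map_poly_of_real:
  "poly (map_poly complex_of_real p) (complex_of_real t) = complex_of_real (poly p t)"
  by (induction p) (simp_all add: map_poly_pCons)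

lemma real_spectrum_alg_poly:
  assumes sa: "self_adjoint x" and t: "t \<in> real_spectrum (alg_poly p x)"
  shows "\<exists>s\<in>real_spectrum x. poly p s = t"
proof (rule ccontr)
  assume none: "\<not> ?thesis"
  define q where "q = map_poly complex_of_real (p - [:t:])"
  have root: "poly q (complex_of_real s) = 0 \<longleftrightarrow> poly p s = t" for s
    by (simp add: q_def poly_map_poly_of_real)
  obtain s where "s \<in> real_spectrum x" using real_spectrum_norm_attained[OF sa] by blast
  then have "q \<noteq> 0" using none root[of s] by auto
  moreover have "c \<notin> cspectrum x" if "poly q c = 0" for c
  proof
    assume c: "c \<in> cspectrum x"
    then have "c = complex_of_real (Re c)"
      using cspectrum_self_adjoint_real[OF sa] by (simp add: complex_eq_iff)
    then show False using none c that root[of "Re c"] by (auto simp: real_spectrum_def)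
  qed
  ultimately have "invertible_el (ceval q x)" by (rule invertible_el_ceval)
  moreover have "ceval q x = alg_poly p x - cscale (complex_of_real t) 1"
    by (simp add: q_def alg_poly_eq_ceval[symmetric] alg_poly_diff alg_poly_const scaleR_conv_cscale)
  ultimately show False using t by (simp add: real_spectrum_def cspectrum_def)
qed

lemma norm_alg_poly_le:
  assumes sa: "self_adjoint x" and bound: "\<And>s. s \<in> real_spectrum x \<Longrightarrow> \<bar>poly p s\<bar> \<le> M"
  shows "norm (alg_poly p x) \<le> M"
proof -
  obtain t where t: "t \<in> real_spectrum (alg_poly p x)" "norm (alg_poly p x) \<le> \<bar>t\<bar>"
    using real_spectrum_norm_attained[OF self_adjoint_alg_poly[OF sa]] by blast
  then obtain s where "s \<in> real_spectrum x" "poly p s = t"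
    using real_spectrum_alg_poly[OF sa] by blast
  then show ?thesis using t bound by force
qed

section \<open>Continuous functional calculus\<close>

lemma uniform_approximation_by_polynomials:
  fixes g :: "real \<Rightarrow> real"
  assumes "compact S" and "continuous_on S g"
  shows "\<exists>P. uniform_limit S (\<lambda>k. poly (P k)) g sequentially"
proof -
  have "\<exists>p. \<forall>t\<in>S. \<bar>g t - poly p t\<bar> < 1 / Suc k" for k
  proof -
    obtain f where f: "real_polynomial_function f" "\<And>t. t \<in> S \<Longrightarrow> \<bar>g t - f t\<bar> < 1 / Suc k"
      using Stone_Weierstrass_real_polynomial_function[OF assms, of "1 / Suc k"] by auto
    obtain a n where "f = (\<lambda>t. \<Sum>i\<le>n. a i * t ^ i)"
      using f(1) real_polynomial_function_iff_sum by blast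
    then have "f = poly (\<Sum>i\<le>n. monom (a i) i)" by (simp add: fun_eq_iff poly_sum poly_monom)
    then show ?thesis using f(2) by blast
  qed
  then obtain P where P: "\<And>k t. t \<in> S \<Longrightarrow> \<bar>g t - poly (P k) t\<bar> < 1 / Suc k" by metis
  have "uniform_limit S (\<lambda>k. poly (P k)) g sequentially"
    unfolding uniform_limit_sequentially_iff
  proof (intro allI impI)
    fix e :: real assume "e > 0"
    then obtain N where N: "1 / Suc N < e" by (rule nat_approx_posE)
    have "dist (poly (P k) t) (g t) < e" if "N \<le> k" "t \<in> S" for k t
    proof -
      have "1 / real (Suc k) \<le> 1 / Suc N" using that(1) by (intro divide_left_mono) simp_all
      then show ?thesis using P[OF that(2), of k] N by (simp add: dist_real_def abs_minus_commute)
    qed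
    then show "\<exists>N. \<forall>k\<ge>N. \<forall>t\<in>S. dist (poly (P k) t) (g t) < e" by blast
  qed
  then show ?thesis by blast
qed

lemma alg_poly_uniform_limit_close:
  assumes sa: "self_adjoint x"
    and p: "uniform_limit (real_spectrum x) (\<lambda>k. poly (p k)) g sequentially"
    and q: "uniform_limit (real_spectrum x) (\<lambda>k. poly (q k)) g sequentially"
    and e: "e > 0"
  shows "\<exists>N. \<forall>m\<ge>N. \<forall>n\<ge>N. norm (alg_poly (p m) x - alg_poly (q n) x) < e"
proof -
  obtain Np where Np: "\<And>k t. Np \<le> k \<Longrightarrow> t \<in> real_spectrum x \<Longrightarrow> dist (poly (p k) t) (g t) < e / 4"
    using uniform_limitD[OF p, of "e / 4"] e unfolding eventually_sequentially by auto
  obtain Nq where Nq: "\<And>k t. Nq \<le> k \<Longrightarrow> t \<in> real_spectrum x \<Longrightarrow> dist (poly (q k) t) (g t) < e / 4"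
    using uniform_limitD[OF q, of "e / 4"] e unfolding eventually_sequentially by auto
  define N where "N = max Np Nq"
  have "norm (alg_poly (p m) x - alg_poly (q n) x) \<le> e / 2" if "N \<le> m" "N \<le> n" for m n
    unfolding alg_poly_diff[symmetric]
  proof (rule norm_alg_poly_le[OF sa])
    fix t assume t: "t \<in> real_spectrum x"
    have "dist (poly (p m) t) (g t) < e / 4" "dist (poly (q n) t) (g t) < e / 4"
      using Np[OF _ t, of m] Nq[OF _ t, of n] that by (simp_all add: N_def)
    then show "\<bar>poly (p m - q n) t\<bar> \<le> e / 2"
      by (simp only: dist_real_def poly_diff abs_le_iff abs_less_iff) linarith
  qed
  then show ?thesis using e by (intro exI[of _ N]) force
qed

lemma cfc_tendsto:
  assumes sa: "self_adjoint x" and g: "continuous_on UNIV g"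
    and p: "uniform_limit (real_spectrum x) (\<lambda>k. poly (p k)) g sequentially"
  shows "(\<lambda>k. alg_poly (p k) x) \<longlonglongrightarrow> cfc g x"
proof -
  obtain P where "uniform_limit {- norm x..norm x} (\<lambda>k. poly (P k)) g sequentially"
    using uniform_approximation_by_polynomials continuous_on_subset[OF g] by blast
  then have P: "uniform_limit (real_spectrum x) (\<lambda>k. poly (P k)) g sequentially"
    using real_spectrum_subset by (rule uniform_limit_on_subset)
  have "Cauchy (\<lambda>k. alg_poly (P k) x)"
    unfolding Cauchy_def dist_norm using alg_poly_uniform_limit_close[OF sa P P] by blast
  then obtain y where y: "(\<lambda>k. alg_poly (P k) x) \<longlonglongrightarrow> y"
    by (auto simp: Cauchy_convergent_iff convergent_def)
  have lim: "(\<lambda>k. alg_poly (q k) x) \<longlonglongrightarrow> y"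
    if q: "uniform_limit (real_spectrum x) (\<lambda>k. poly (q k)) g sequentially" for q
  proof -
    have "(\<lambda>k. alg_poly (q k) x - alg_poly (P k) x) \<longlonglongrightarrow> 0"
      by (rule LIMSEQ_I) (use alg_poly_uniform_limit_close[OF sa q P] in fastforce)
    from tendsto_add[OF this y] show ?thesis by simp
  qed
  have "cfc g x = y"
    unfolding cfc_def real_spectrum_def[symmetric]
  proof (rule the_equality)
    fix y' assume "\<forall>p. uniform_limit (real_spectrum x) (\<lambda>k. poly (p k)) g sequentially \<longrightarrow>
        (\<lambda>k. alg_poly (p k) x) \<longlonglongrightarrow> y'"
    then show "y' = y" using P y LIMSEQ_unique by blast
  qed (use lim in blast)
  then show ?thesis using lim[OF p] by simp
qed

lemma cfc_approx:
  assumes "self_adjoint x" and g: "continuous_on UNIV g"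
  obtains P where "uniform_limit {- norm x..norm x} (\<lambda>k. poly (P k)) g sequentially"
    and "uniform_limit (real_spectrum x) (\<lambda>k. poly (P k)) g sequentially"
    and "(\<lambda>k. alg_poly (P k) x) \<longlonglongrightarrow> cfc g x"
proof -
  obtain P where P: "uniform_limit {- norm x..norm x} (\<lambda>k. poly (P k)) g sequentially"
    using uniform_approximation_by_polynomials continuous_on_subset[OF g] by blast
  then have "uniform_limit (real_spectrum x) (\<lambda>k. poly (P k)) g sequentially"
    using real_spectrum_subset by (rule uniform_limit_on_subset)
  with P show ?thesis using that cfc_tendsto[OF assms] by blast
qed


lemma cfc_add:
  assumes sa: "self_adjoint x" and g: "continuous_on UNIV g" and h: "continuous_on UNIV h"
  shows "cfc (\<lambda>t. g t + h t) x = cfc g x + cfc h x"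
proof -
  obtain P where P: "uniform_limit (real_spectrum x) (\<lambda>k. poly (P k)) g sequentially"
      "(\<lambda>k. alg_poly (P k) x) \<longlonglongrightarrow> cfc g x"
    using cfc_approx[OF sa g] by metis
  obtain Q where Q: "uniform_limit (real_spectrum x) (\<lambda>k. poly (Q k)) h sequentially"
      "(\<lambda>k. alg_poly (Q k) x) \<longlonglongrightarrow> cfc h x"
    using cfc_approx[OF sa h] by metis
  have "uniform_limit (real_spectrum x) (\<lambda>k t. poly (P k + Q k) t) (\<lambda>t. g t + h t) sequentially"
    using uniform_limit_add[OF P(1) Q(1)] by simp
  then have "(\<lambda>k. alg_poly (P k + Q k) x) \<longlonglongrightarrow> cfc (\<lambda>t. g t + h t) x"
    by (intro cfc_tendsto[OF sa] continuous_on_add g h)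
  moreover have "(\<lambda>k. alg_poly (P k + Q k) x) \<longlonglongrightarrow> cfc g x + cfc h x"
    unfolding alg_poly_add by (rule tendsto_add[OF P(2) Q(2)])
  ultimately show ?thesis by (rule LIMSEQ_unique)
qed

lemma cfc_mult:
  assumes sa: "self_adjoint x" and g: "continuous_on UNIV g" and h: "continuous_on UNIV h"
  shows "cfc (\<lambda>t. g t * h t) x = cfc g x * cfc h x"
proof -
  obtain P where P: "uniform_limit {- norm x..norm x} (\<lambda>k. poly (P k)) g sequentially"
      "(\<lambda>k. alg_poly (P k) x) \<longlonglongrightarrow> cfc g x"
    using cfc_approx[OF sa g] by metis
  obtain Q where Q: "uniform_limit {- norm x..norm x} (\<lambda>k. poly (Q k)) h sequentially"
      "(\<lambda>k. alg_poly (Q k) x) \<longlonglongrightarrow> cfc h x"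
    using cfc_approx[OF sa h] by metis
  have "bounded (g ` {- norm x..norm x})" "bounded (h ` {- norm x..norm x})"
    by (intro compact_imp_bounded compact_continuous_image continuous_on_subset[OF g]
        continuous_on_subset[OF h]; simp)+
  then have "uniform_limit {- norm x..norm x} (\<lambda>k t. poly (P k * Q k) t) (\<lambda>t. g t * h t) sequentially"
    using uniform_lim_mult[OF P(1) Q(1)] by simp
  then have "uniform_limit (real_spectrum x) (\<lambda>k t. poly (P k * Q k) t) (\<lambda>t. g t * h t) sequentially"
    using real_spectrum_subset by (rule uniform_limit_on_subset)
  then have "(\<lambda>k. alg_poly (P k * Q k) x) \<longlonglongrightarrow> cfc (\<lambda>t. g t * h t) x"
    by (intro cfc_tendsto[OF sa] continuous_on_mult g h)
  moreover have "(\<lambda>k. alg_poly (P k * Q k) x) \<longlonglongrightarrow> cfc g x * cfc h x"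
    unfolding alg_poly_mult by (rule tendsto_mult[OF P(2) Q(2)])
  ultimately show ?thesis by (rule LIMSEQ_unique)
qed

lemma cfc_const:
  assumes "self_adjoint x"
  shows "cfc (\<lambda>t. c) x = c *\<^sub>R 1"
proof -
  have "poly [:c:] = (\<lambda>t. c)" by (simp add: fun_eq_iff)
  then have "(\<lambda>k. alg_poly [:c:] x) \<longlonglongrightarrow> cfc (\<lambda>t. c) x"
    by (intro cfc_tendsto[OF assms]) (simp_all add: uniform_limit_const)
  then show ?thesis by (simp add: alg_poly_const LIMSEQ_const_iff)
qed

lemma self_adjoint_cfc:
  assumes sa: "self_adjoint x" and g: "continuous_on UNIV g"
  shows "self_adjoint (cfc g x)"
proof -
  obtain P where P: "(\<lambda>k. alg_poly (P k) x) \<longlonglongrightarrow> cfc g x"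
    using cfc_approx[OF sa g] by metis
  then have "(\<lambda>k. cstar (alg_poly (P k) x)) \<longlonglongrightarrow> cstar (cfc g x)"
    by (rule bounded_linear.tendsto[OF bounded_linear_cstar])
  then have "(\<lambda>k. alg_poly (P k) x) \<longlonglongrightarrow> cstar (cfc g x)"
    using self_adjoint_alg_poly[OF sa] by (simp add: self_adjoint_def)
  then show ?thesis using P LIMSEQ_unique unfolding self_adjoint_def by blast
qed

lemma cfc_add_scalar:
  assumes sa: "self_adjoint x" and g: "continuous_on UNIV g"
  shows "cfc g (x + c *\<^sub>R 1) = cfc (\<lambda>t. g (t + c)) x"
proof -
  have "continuous_on UNIV (\<lambda>t. g (t + c))"
    by (rule continuous_on_compose2[OF g]) (auto intro: continuous_intros)
  then obtain P where P: "uniform_limit (real_spectrum x) (\<lambda>k. poly (P k)) (\<lambda>t. g (t + c)) sequentially"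
      "(\<lambda>k. alg_poly (P k) x) \<longlonglongrightarrow> cfc (\<lambda>t. g (t + c)) x"
    using cfc_approx[OF sa] by metis
  define Q where "Q k = pcompose (P k) [:- c, 1:]" for k
  have "t - c \<in> real_spectrum x" if "t \<in> real_spectrum (x + c *\<^sub>R 1)" for t
  proof -
    have shift: "x + c *\<^sub>R 1 - cscale (complex_of_real t) 1 = x - cscale (complex_of_real (t - c)) 1"
      by (simp add: scaleR_conv_cscale cscale_diff_left)
    show ?thesis using that unfolding real_spectrum_def cspectrum_def mem_Collect_eq shift .
  qed
  moreover have "poly (Q k) = (\<lambda>t. poly (P k) (t - c))" for k
    by (simp add: Q_def fun_eq_iff poly_pcompose)
  ultimately have "uniform_limit (real_spectrum (x + c *\<^sub>R 1)) (\<lambda>k. poly (Q k)) g sequentially"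
    using uniform_limit_compose'[OF P(1), of "\<lambda>t. t - c"] by (simp add: Pi_iff)
  then have "(\<lambda>k. alg_poly (Q k) (x + c *\<^sub>R 1)) \<longlonglongrightarrow> cfc g (x + c *\<^sub>R 1)"
    by (intro cfc_tendsto self_adjoint_add_scalar sa g)
  moreover have "alg_poly (Q k) (x + c *\<^sub>R 1) = alg_poly (P k) x" for k
    by (simp add: Q_def alg_poly_pcompose alg_poly_pCons alg_poly_const)
  ultimately show ?thesis using P(2) LIMSEQ_unique by auto
qed

lemma cfc_sum:
  assumes sa: "self_adjoint x" and "finite I" and "\<And>i. i \<in> I \<Longrightarrow> continuous_on UNIV (g i)"
  shows "cfc (\<lambda>t. \<Sum>i\<in>I. g i t) x = (\<Sum>i\<in>I. cfc (g i) x)"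
  using assms(2,3)
proof (induction I rule: finite_induct)
  case empty
  then show ?case using cfc_const[OF sa, of 0] by simp
next
  case (insert i I)
  then have "cfc (\<lambda>t. g i t + (\<Sum>j\<in>I. g j t)) x = cfc (g i) x + cfc (\<lambda>t. \<Sum>j\<in>I. g j t) x"
    by (intro cfc_add[OF sa] continuous_on_sum) auto
  with insert show ?case by simp
qed

section \<open>Tracial states\<close>

lemma tracial_state_sum: "tracial_state \<tau> \<Longrightarrow> \<tau> (\<Sum>i\<in>A. f i) = (\<Sum>i\<in>A. \<tau> (f i))"
  unfolding tracial_state_def
  by (induction A rule: infinite_finite_induct) (auto dest: spec[of _ 0] spec[of _ 0])

lemma tracial_state_cfc_nonneg:
  assumes \<tau>: "tracial_state \<tau>" and sa: "self_adjoint x" and g: "continuous_on UNIV g"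
    and nonneg: "\<And>t. 0 \<le> g t"
  shows "\<tau> (cfc g x) \<in> \<real> \<and> 0 \<le> Re (\<tau> (cfc g x))"
proof -
  define h where "h = cfc (\<lambda>t. sqrt (g t)) x"
  have sqrt_g: "continuous_on UNIV (\<lambda>t. sqrt (g t))" by (intro continuous_intros g)
  have "cfc g x = cfc (\<lambda>t. sqrt (g t) * sqrt (g t)) x" using nonneg by simp
  also have "\<dots> = cstar h * h"
    using cfc_mult[OF sa sqrt_g sqrt_g] self_adjoint_cfc[OF sa sqrt_g]
    by (simp add: h_def self_adjoint_def)
  finally have "cfc g x = cstar h * h" .
  moreover have "Im (\<tau> (cstar h * h)) = 0 \<and> 0 \<le> Re (\<tau> (cstar h * h))"
    using \<tau> unfolding tracial_state_def by blast
  ultimately show ?thesis by (simp add: complex_is_Real_iff)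
qed

lemma tracial_state_cfc_le_one:
  assumes \<tau>: "tracial_state \<tau>" and sa: "self_adjoint x" and g: "continuous_on UNIV g"
    and le_one: "\<And>t. g t \<le> 1"
  shows "\<tau> (cfc g x) \<in> \<real> \<and> Re (\<tau> (cfc g x)) \<le> 1"
proof -
  have one_minus_g: "continuous_on UNIV (\<lambda>t. 1 - g t)" by (intro continuous_intros g)
  have "cfc (\<lambda>t. 1 - g t) x + cfc g x = 1"
    using cfc_add[OF sa one_minus_g g] cfc_const[OF sa, of 1] by simp
  moreover have "\<tau> (a + b) = \<tau> a + \<tau> b" "\<tau> 1 = 1" for a b
    using \<tau> by (simp_all add: tracial_state_def)
  ultimately have "\<tau> (cfc g x) = 1 - \<tau> (cfc (\<lambda>t. 1 - g t) x)"
    by (metis add_diff_cancel_left')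
  moreover have "\<tau> (cfc (\<lambda>t. 1 - g t) x) \<in> \<real> \<and> 0 \<le> Re (\<tau> (cfc (\<lambda>t. 1 - g t) x))"
    using le_one by (intro tracial_state_cfc_nonneg[OF \<tau> sa one_minus_g]) simp
  ultimately show ?thesis by (simp add: complex_is_Real_iff)
qed

section \<open>Shifted cut-off functions\<close>

lemma chi_eq_max_min:
  assumes "\<delta> > 0"
  shows "chi \<delta> t = max 0 (min 1 (2 - 2 * \<bar>t\<bar> / \<delta>))"
proof -
  have "2 * \<bar>t\<bar> / \<delta> < 1 \<longleftrightarrow> \<bar>t\<bar> < \<delta> / 2" "2 < 2 * \<bar>t\<bar> / \<delta> \<longleftrightarrow> \<delta> < \<bar>t\<bar>"
    using assms by (simp_all add: field_simps)
  then show ?thesis by (auto simp: chi_def)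
qed

lemma continuous_on_chi:
  assumes "\<delta> > 0"
  shows "continuous_on UNIV (chi \<delta>)"
proof -
  have "chi \<delta> = (\<lambda>t. max 0 (min 1 (2 - 2 * \<bar>t\<bar> / \<delta>)))"
    using chi_eq_max_min[OF assms] by (simp add: fun_eq_iff)
  then show ?thesis using assms by (auto intro!: continuous_on_max continuous_on_min continuous_intros)
qed

lemma chi_le_one: "\<delta> > 0 \<Longrightarrow> chi \<delta> t \<le> 1"
  by (simp add: chi_eq_max_min)

lemma chi_eq_zero: "\<delta> < \<bar>t\<bar> \<Longrightarrow> chi \<delta> t = 0"
  by (simp add: chi_def)

lemma sum_chi_shifts_le_one:
  assumes \<delta>: "\<delta> > 0" and "finite I"
    and sep: "\<And>i j. i \<in> I \<Longrightarrow> j \<in> I \<Longrightarrow> i \<noteq> j \<Longrightarrow> 2 * \<delta> < \<bar>c i - c j\<bar>"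
  shows "(\<Sum>i\<in>I. chi \<delta> (t + c i)) \<le> 1"
proof (cases "\<exists>i\<in>I. chi \<delta> (t + c i) \<noteq> 0")
  case True
  then obtain i where i: "i \<in> I" "chi \<delta> (t + c i) \<noteq> 0" by blast
  then have near: "\<bar>t + c i\<bar> \<le> \<delta>" using chi_eq_zero by force
  have "chi \<delta> (t + c j) = 0" if "j \<in> I - {i}" for j
    using sep[of i j] that i(1) near by (intro chi_eq_zero) auto
  then have "(\<Sum>j\<in>I. chi \<delta> (t + c j)) = chi \<delta> (t + c i)"
    using \<open>finite I\<close> i(1) by (simp add: sum.remove)
  then show ?thesis using chi_le_one[OF \<delta>] by simp
qed simp

lemma tracial_state_sum_cfc_chi_shifts:
  assumes \<tau>: "tracial_state \<tau>" and sa: "self_adjoint f" and \<delta>: "\<delta> > 0" and I: "finite I"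
    and sep: "\<And>i j. i \<in> I \<Longrightarrow> j \<in> I \<Longrightarrow> i \<noteq> j \<Longrightarrow> 2 * \<delta> < \<bar>c i - c j\<bar>"
  shows "(\<Sum>i\<in>I. \<tau> (cfc (chi \<delta>) (f + c i *\<^sub>R 1))) \<in> \<real> \<and>
    Re (\<Sum>i\<in>I. \<tau> (cfc (chi \<delta>) (f + c i *\<^sub>R 1))) \<le> 1"
proof -
  have shifted: "continuous_on UNIV (\<lambda>t. chi \<delta> (t + c i))" for i
    by (rule continuous_on_compose2[OF continuous_on_chi[OF \<delta>]]) (auto intro: continuous_intros)
  have "(\<Sum>i\<in>I. \<tau> (cfc (chi \<delta>) (f + c i *\<^sub>R 1))) = \<tau> (cfc (\<lambda>t. \<Sum>i\<in>I. chi \<delta> (t + c i)) f)"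
    by (simp add: tracial_state_sum[OF \<tau>] cfc_sum[OF sa I shifted]
        cfc_add_scalar[OF sa continuous_on_chi[OF \<delta>]])
  moreover have "continuous_on UNIV (\<lambda>t. \<Sum>i\<in>I. chi \<delta> (t + c i))"
    by (intro continuous_on_sum shifted)
  ultimately show ?thesis
    using tracial_state_cfc_le_one[OF \<tau> sa _ sum_chi_shifts_le_one[OF \<delta> I sep]] by simp
qed

lemma abs_diff_of_nat_mult_ge:
  assumes "i \<noteq> j" and "0 \<le> s"
  shows "s \<le> \<bar>real i * s - real j * s\<bar>"
proof -
  have "1 \<le> \<bar>real i - real j\<bar>" using assms(1) by linarith
  then have "1 * s \<le> \<bar>real i - real j\<bar> * s" using assms(2) by (rule mult_right_mono)
  then show ?thesis using assms(2) by (simp add: left_diff_distrib[symmetric] abs_mult)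
qed

lemma tracial_state_average_cfc_chi_shifts:
  fixes \<tau> :: "'a::cstar_algebra \<Rightarrow> complex" and f :: 'a and n :: nat and s :: real
  assumes "tracial_state \<tau>" and "self_adjoint f" and "s > 0"
  defines "z \<equiv> (1 / of_nat n) * (\<Sum>i=1..n. \<tau> (cfc (chi (s / 4)) (f + (real i * s) *\<^sub>R 1)))"
  shows "z \<in> \<real> \<and> Re z \<le> 1 / n"
proof -
  let ?sum = "\<Sum>i=1..n. \<tau> (cfc (chi (s / 4)) (f + (real i * s) *\<^sub>R 1))"
  have "?sum \<in> \<real> \<and> Re ?sum \<le> 1"
    using assms(3) abs_diff_of_nat_mult_ge[of _ _ s]
    by (intro tracial_state_sum_cfc_chi_shifts[OF assms(1,2)]) force+
  then show ?thesis by (simp add: z_def complex_is_Real_iff divide_right_mono)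
qed

theorem corollary3p9:
  fixes f :: "'a::cstar_algebra" and \<epsilon> :: real
  assumes "self_adjoint f" and "\<epsilon> > 0"
  shows "\<exists>n::nat. \<exists>\<delta>>0. \<exists>fs :: nat \<Rightarrow> 'a. n \<ge> 1 \<and>
           (\<forall>i\<in>{1..n}. self_adjoint (fs i) \<and> norm (f - fs i) < \<epsilon>) \<and>
           (\<forall>\<tau>. tracial_state \<tau> \<longrightarrow>
              (1 / of_nat n) * (\<Sum>i=1..n. \<tau> (cfc (chi \<delta>) (fs i))) \<in> {z. z \<in> \<real> \<and> Re z < \<epsilon>})"
proof -
  obtain N :: nat where N: "1 / real (Suc N) < \<epsilon>" using assms(2) by (rule nat_approx_posE)
  define s where "s = \<epsilon> / (Suc N + 1)"
  define fs where "fs i = f + (real i * s) *\<^sub>R 1" for i :: nat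
  have "s > 0" using assms(2) by (simp add: s_def)
  have "norm (f - fs i) < \<epsilon>" if "i \<le> Suc N" for i
  proof -
    have "norm (f - fs i) = real i * s" using \<open>s > 0\<close> by (simp add: fs_def abs_mult)
    also have "\<dots> < (Suc N + 1) * s" using that \<open>s > 0\<close> by (intro mult_strict_right_mono) simp_all
    finally show ?thesis by (simp add: s_def)
  qed
  moreover have "(1 / of_nat (Suc N)) * (\<Sum>i=1..Suc N. \<tau> (cfc (chi (s / 4)) (fs i)))
      \<in> {z. z \<in> \<real> \<and> Re z < \<epsilon>}" if "tracial_state \<tau>" for \<tau>
    using tracial_state_average_cfc_chi_shifts[OF that assms(1) \<open>s > 0\<close>, of "Suc N"] N
    by (simp add: fs_def)
  ultimately show ?thesis
    using \<open>s > 0\<close> assms(1)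
    by (intro exI[of _ "Suc N"] exI[of _ "s / 4"] exI[of _ fs] conjI) (auto simp: fs_def self_adjoint_add_scalar)
qed

end
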